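(* Let $\lambda$ be a nonzero real number. For every integer $n\ge0$ and every real $x$ with $1+\lambda x>0$, \[ \mathrm{Bel}_{n+1,\lambda}(x)=\frac{x}{1+\lambda x}\Big(\mathrm{Bel}_{n,\lambda}'(x)+\mathrm{Bel}_{n,\lambda}(x)+\lambda x\,\mathrm{Bel}_{n,\lambda}'(x)\Big), \] where $\mathrm{Bel}_{n,\lambda}'(x)=\frac{d}{dx}\mathrm{Bel}_{n,\lambda}(x)$.
   Context: For nonzero real $\lambda$, $e_\lambda(x)=(1+\lambda x)^{1/\lambda}$ and $e_\lambda^{-1}(x)=(1+\lambda x)^{-1/\lambda}$. The new type degenerate Bell polynomials $\mathrm{Bel}_{n,\lambda}(x)$ are defined by $e_{\lambda}(xe^{t})\,e_{\lambda}^{-1}(x)=\big(\frac{1+\lambda xe^t}{1+\lambda x}\big)^{1/\lambda}=\sum_{n=0}^{\infty}\mathrm{Bel}_{n,\lambda}(x)\frac{t^{n}}{n!}$ (expansion in powers of $t$). *)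

theory Defs
  imports "HOL-Analysis.Analysis"
begin

text \<open>Generating function of the new type degenerate Bell polynomials:
  e_lambda(x e^t) e_lambda^{-1}(x) = ((1 + lambda x e^t)/(1 + lambda x))^(1/lambda).\<close>
definition degBel_gf :: "real \<Rightarrow> real \<Rightarrow> real \<Rightarrow> real" where
  "degBel_gf lam x t = ((1 + lam * x * exp t) / (1 + lam * x)) powr (1 / lam)"

text \<open>Bel_{n,lambda}(x) is n! times the n-th Taylor coefficient in t at t = 0,
  i.e. the n-th derivative in t at t = 0.\<close>
definition degBel :: "nat \<Rightarrow> real \<Rightarrow> real \<Rightarrow> real" where
  "degBel n lam x = (deriv ^^ n) (degBel_gf lam x) 0"

end

theory Submission
  imports Defs "HOL-Computational_Algebra.Polynomial"
begin

(* Write F(t) for the generating function at fixed x and u = x e^t, so that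
   F'(t) = F(t) u / (1 + \<lambda> u). By induction on n, near every t with 1 + \<lambda> u > 0 the n-th
   t-derivative of F is F(t) R_n(u), where R_0 = 1 and, by the product and chain rules,
   R_(n+1)(u) = u / (1 + \<lambda> u) (R_n(u) + (1 + \<lambda> u) R_n'(u)).
   Since F(0) = 1, Bel_n = R_n on the open set 1 + \<lambda> x > 0, which is the claimed recurrence.
   To know that every R_n is differentiable we carry it as P_n(u) / (1 + \<lambda> u)^n with
   polynomials P_n. *)

fun degBel_num :: "real \<Rightarrow> nat \<Rightarrow> real poly" where
  "degBel_num lam 0 = 1"
| "degBel_num lam (Suc n) =
     [:0, 1:] * (pderiv (degBel_num lam n) * [:1, lam:] + smult (1 - real n * lam) (degBel_num lam n))"

definition degBel_rat :: "real \<Rightarrow> nat \<Rightarrow> real \<Rightarrow> real" where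
  "degBel_rat lam n u = poly (degBel_num lam n) u / (1 + lam * u) ^ n"

lemma degBel_rat_has_real_derivative:
  assumes "1 + lam * u \<noteq> 0"
  shows "(degBel_rat lam n has_real_derivative
           (poly (pderiv (degBel_num lam n)) u * (1 + lam * u) - real n * lam * poly (degBel_num lam n) u)
             / (1 + lam * u) ^ Suc n) (at u)"
proof -
  have quotient_eq: "(a * A ^ n - b * (real n * (lam * A ^ (n - Suc 0)))) / (A ^ n * A ^ n)
                       = (a * A - real n * lam * b) / A ^ Suc n" if "A \<noteq> 0" for a b A :: real
    using that by (cases n) (simp_all add: field_simps)
  have "((\<lambda>u. 1 + lam * u) has_real_derivative lam) (at u)"
    by (auto intro!: derivative_eq_intros)
  from DERIV_divide[OF poly_DERIV[where p = "degBel_num lam n"] DERIV_power[OF this, where n = n]]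
  show ?thesis
    using assms unfolding degBel_rat_def by (simp add: quotient_eq)
qed

lemma degBel_rat_Suc:
  assumes "1 + lam * u \<noteq> 0"
  shows "degBel_rat lam (Suc n) u
           = u / (1 + lam * u) * (degBel_rat lam n u + (1 + lam * u) * deriv (degBel_rat lam n) u)"
proof -
  define A where "A = 1 + lam * u"
  define p where "p = poly (degBel_num lam n) u"
  define dp where "dp = poly (pderiv (degBel_num lam n)) u"
  have "A \<noteq> 0" using assms by (simp add: A_def)
  have num_Suc: "poly (degBel_num lam (Suc n)) u = u * (dp * A + (1 - real n * lam) * p)"
    by (simp add: A_def p_def dp_def algebra_simps)
  have deriv_eq: "deriv (degBel_rat lam n) u = (dp * A - real n * lam * p) / A ^ Suc n"
    using DERIV_imp_deriv[OF degBel_rat_has_real_derivative[OF assms, of n]]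
    by (simp add: A_def p_def dp_def)
  have "u * (dp * A + (1 - real n * lam) * p) / A ^ Suc n
          = u / A * (p / A ^ n + A * ((dp * A - real n * lam * p) / A ^ Suc n))"
    using \<open>A \<noteq> 0\<close> by (simp add: field_simps)
  then show ?thesis
    unfolding degBel_rat_def num_Suc deriv_eq A_def[symmetric] p_def[symmetric] .
qed

lemma degBel_gf_has_real_derivative:
  assumes "lam \<noteq> 0" "1 + lam * x > 0" "1 + lam * x * exp t > 0"
  shows "(degBel_gf lam x has_real_derivative
           degBel_gf lam x t * (x * exp t / (1 + lam * x * exp t))) (at t)"
proof -
  define g where "g t = (1 + lam * x * exp t) / (1 + lam * x)" for t
  have "g t > 0" using assms by (simp add: g_def)
  have "(g has_real_derivative lam * x * exp t / (1 + lam * x)) (at t)"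
    unfolding g_def using assms by (auto intro!: derivative_eq_intros)
  from DERIV_fun_powr[OF this \<open>g t > 0\<close>, of "1 / lam"]
  have "((\<lambda>t. g t powr (1 / lam)) has_real_derivative
          g t powr (1 / lam) / g t * (x * exp t / (1 + lam * x))) (at t)"
    using \<open>g t > 0\<close> \<open>lam \<noteq> 0\<close> by (simp add: powr_diff)
  then show ?thesis
    using assms by (simp add: degBel_gf_def[abs_def] g_def[abs_def])
qed

lemma higher_deriv_degBel_gf:
  assumes "lam \<noteq> 0" "1 + lam * x > 0" "1 + lam * x * exp t > 0"
  shows "(deriv ^^ n) (degBel_gf lam x) t = degBel_gf lam x t * degBel_rat lam n (x * exp t)"
  using assms(3)
proof (induction n arbitrary: t)
  case 0
  then show ?case by (simp add: degBel_rat_def)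
next
  case (Suc n)
  define u where "u = x * exp t"
  have "1 + lam * u > 0" using Suc.prems by (simp add: u_def mult.assoc)
  have "eventually (\<lambda>s. 1 + lam * x * exp s > 0) (nhds t)"
    using Suc.prems by (rule order_tendstoD(1)[rotated]) (auto intro!: tendsto_eq_intros filterlim_ident)
  then have "eventually (\<lambda>s. (deriv ^^ n) (degBel_gf lam x) s
               = degBel_gf lam x s * degBel_rat lam n (x * exp s)) (nhds t)"
    by (rule eventually_mono) (rule Suc.IH)
  then have "(deriv ^^ Suc n) (degBel_gf lam x) t
               = deriv (\<lambda>s. degBel_gf lam x s * degBel_rat lam n (x * exp s)) t"
    by (simp add: deriv_cong_ev)
  also have "\<dots> = degBel_gf lam x t * (u / (1 + lam * u)) * degBel_rat lam n u
                    + deriv (degBel_rat lam n) u * u * degBel_gf lam x t"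
  proof -
    have gf: "(degBel_gf lam x has_real_derivative degBel_gf lam x t * (u / (1 + lam * u))) (at t)"
      using degBel_gf_has_real_derivative[OF assms(1,2) Suc.prems] by (simp add: u_def mult.assoc)
    have rat: "(degBel_rat lam n has_real_derivative deriv (degBel_rat lam n) u) (at u)"
      using degBel_rat_has_real_derivative[of lam u n] \<open>1 + lam * u > 0\<close>
      by (auto simp: DERIV_deriv_iff_has_field_derivative)
    have "((\<lambda>s. x * exp s) has_real_derivative x * exp t) (at t)"
      by (auto intro!: derivative_eq_intros)
    from DERIV_chain2[OF rat[unfolded u_def] this]
    have "((\<lambda>s. degBel_rat lam n (x * exp s)) has_real_derivative deriv (degBel_rat lam n) u * u) (at t)"
      by (simp add: u_def)
    from DERIV_mult[OF gf this] show ?thesis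
      by (simp add: DERIV_imp_deriv u_def)
  qed
  also have "\<dots> = degBel_gf lam x t * degBel_rat lam (Suc n) u"
    using degBel_rat_Suc[of lam u n] \<open>1 + lam * u > 0\<close> by (simp add: field_simps)
  finally show ?case by (simp add: u_def)
qed

lemma degBel_eq_degBel_rat:
  assumes "lam \<noteq> 0" "1 + lam * x > 0"
  shows "degBel n lam x = degBel_rat lam n x"
  using higher_deriv_degBel_gf[OF assms, of 0 n] assms by (simp add: degBel_def degBel_gf_def)

theorem theorem9:
  fixes lam x :: real and n :: nat
  assumes "lam \<noteq> 0" and "1 + lam * x > 0"
  shows "degBel (Suc n) lam x =
    x / (1 + lam * x) * (deriv (\<lambda>y. degBel n lam y) x + degBel n lam x
                          + lam * x * deriv (\<lambda>y. degBel n lam y) x)"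
proof -
  have "eventually (\<lambda>y. 1 + lam * y > 0) (nhds x)"
    using assms(2) by (rule order_tendstoD(1)[rotated]) (auto intro!: tendsto_eq_intros filterlim_ident)
  then have "eventually (\<lambda>y. degBel n lam y = degBel_rat lam n y) (nhds x)"
    by (rule eventually_mono) (rule degBel_eq_degBel_rat[OF assms(1)])
  then have "deriv (\<lambda>y. degBel n lam y) x = deriv (degBel_rat lam n) x"
    by (simp add: deriv_cong_ev)
  moreover have "degBel (Suc n) lam x
      = x / (1 + lam * x) * (degBel_rat lam n x + (1 + lam * x) * deriv (degBel_rat lam n) x)"
    using degBel_rat_Suc assms degBel_eq_degBel_rat by simp
  ultimately show ?thesis
    using degBel_eq_degBel_rat[OF assms] by (simp add: algebra_simps)
qed

end
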